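(* Let $\mathcal{R}:=\mathbb{C}[s_1,\dots,s_k,z]/(P^2)$, where $P=P_s(z)$. For each integer $p\in[0,k-1]$ the following equality holds in $\mathcal{R}^k=\mathbb{C}^k\otimes_{\mathbb{C}}\mathcal{R}$: $$z^pE(z)=A(s)^pE(z)+(-1)^{k-1}P_s(z)\frac{\partial(A(s)^p)}{\partial s_k}E(z).$$ In particular, for any entire function $f$ of $z$, $\Phi_{zf}=A(s)\Phi_f$. Moreover, the following identity holds in $\mathcal{R}^k$: $$P'_s(z)E(z)=P'_s(A(s))E(z)+(-1)^{k-1}P_s(z)\frac{\partial(P'_s(A(s)))}{\partial s_k}E(z).$$
   Context: Fix an integer $k\ge 2$. Use coordinates $s=(s_1,\dots,s_k)$, set $s_0:=1$, $P_s(z):=\sum_{h=0}^k(-1)^hs_hz^{k-h}$ and $P'_s(z):=\partial_zP_s(z)=\sum_{h=0}^{k-1}(-1)^h(k-h)s_hz^{k-h-1}$. Let $E(z):=(1,z,\dots,z^{k-1})^T$. $A(s)$ is the $(k,k)$ companion matrix with $A_{i,i+1}=1$ for $i\in[1,k-1]$, last row $A_{k,j}=(-1)^{k-j}s_{k+1-j}$ for $j\in[1,k]$, all other entries $0$; $P'_s(A(s)):=\sum_{h=0}^{k-1}(-1)^h(k-h)s_hA(s)^{k-h-1}$. For an entire $f$, $\Phi_f(s):=\frac{1}{2i\pi}\int_{|\zeta|=R}\frac{f(\zeta)E(\zeta)\,d\zeta}{P_s(\zeta)}$ with $R$ large enough that all roots of $P_s$ lie in $\{|\zeta|<R\}$.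 *)

theory Defs
  imports "HOL-Complex_Analysis.Complex_Analysis" "Jordan_Normal_Form.Matrix"
begin

text \<open>Coordinates s = (s_1,...,s_k) are represented by s :: nat => complex; only s 1 .. s k
  matter and s_0 is always taken to be 1 (the value s 0 is ignored).\<close>

definition sc :: "(nat \<Rightarrow> complex) \<Rightarrow> nat \<Rightarrow> complex" where
  "sc s h = (if h = 0 then 1 else s h)"

definition Ps :: "nat \<Rightarrow> (nat \<Rightarrow> complex) \<Rightarrow> complex \<Rightarrow> complex" where
  "Ps k s z = (\<Sum>h=0..k. (-1)^h * sc s h * z^(k-h))"

definition dPs :: "nat \<Rightarrow> (nat \<Rightarrow> complex) \<Rightarrow> complex \<Rightarrow> complex" where
  "dPs k s z = (\<Sum>h=0..k-1. (-1)^h * of_nat (k-h) * sc s h * z^(k-h-1))"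

definition Evec :: "nat \<Rightarrow> complex \<Rightarrow> complex vec" where
  "Evec k z = vec k (\<lambda>i. z^i)"

text \<open>Companion matrix, 0-based indices: entry (i,i+1) = 1 for i < k-1; last row
  (i = k-1): entry (k-1,j) = (-1)^(k-1-j) s_(k-j) (the paper's A_{k,j'} = (-1)^(k-j') s_(k+1-j')
  with j' = j+1).\<close>
definition Acomp :: "nat \<Rightarrow> (nat \<Rightarrow> complex) \<Rightarrow> complex mat" where
  "Acomp k s = mat k k (\<lambda>(i,j).
      if i + 1 = k then (-1)^(k-1-j) * s (k - j)
      else if j = i + 1 then 1 else 0)"

definition dPsA :: "nat \<Rightarrow> (nat \<Rightarrow> complex) \<Rightarrow> complex mat" where
  "dPsA k s = foldr (\<lambda>h M. ((-1)^h * of_nat (k-h) * sc s h) \<cdot>\<^sub>m (Acomp k s ^\<^sub>m (k-h-1)) + M)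
      [0..<k] (0\<^sub>m k k)"

definition dsk_mat :: "nat \<Rightarrow> ((nat \<Rightarrow> complex) \<Rightarrow> complex mat) \<Rightarrow> (nat \<Rightarrow> complex) \<Rightarrow> complex mat" where
  "dsk_mat k F s = mat k k (\<lambda>(i,j). deriv (\<lambda>t. F (s(k := t)) $$ (i,j)) (s k))"

text \<open>Polynomial functions in the variables s_1,...,s_k and z (with complex coefficients).
  Since C is infinite, these correspond exactly to elements of C[s_1,...,s_k,z].\<close>
inductive polyfun :: "nat \<Rightarrow> ((nat \<Rightarrow> complex) \<Rightarrow> complex \<Rightarrow> complex) \<Rightarrow> bool" for k where
  pf_const: "polyfun k (\<lambda>s z. c)"
| pf_z: "polyfun k (\<lambda>s z. z)"
| pf_s: "1 \<le> i \<Longrightarrow> i \<le> k \<Longrightarrow> polyfun k (\<lambda>s z. s i)"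
| pf_add: "polyfun k f \<Longrightarrow> polyfun k g \<Longrightarrow> polyfun k (\<lambda>s z. f s z + g s z)"
| pf_mult: "polyfun k f \<Longrightarrow> polyfun k g \<Longrightarrow> polyfun k (\<lambda>s z. f s z * g s z)"

text \<open>Equality in R^k = (C[s_1..s_k,z]/(P^2))^k of two vector-valued polynomial maps:
  the difference is P_s(z)^2 times a vector of polynomials.\<close>
definition eq_mod_P2 :: "nat \<Rightarrow> ((nat \<Rightarrow> complex) \<Rightarrow> complex \<Rightarrow> complex vec)
    \<Rightarrow> ((nat \<Rightarrow> complex) \<Rightarrow> complex \<Rightarrow> complex vec) \<Rightarrow> bool" where
  "eq_mod_P2 k U V \<longleftrightarrow> (\<exists>g :: (nat \<Rightarrow> complex) \<Rightarrow> complex \<Rightarrow> nat \<Rightarrow> complex.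
      (\<forall>i<k. polyfun k (\<lambda>s z. g s z i)) \<and>
      (\<forall>s z. U s z - V s z = (Ps k s z ^ 2) \<cdot>\<^sub>v vec k (g s z)))"

definition Phi :: "nat \<Rightarrow> (complex \<Rightarrow> complex) \<Rightarrow> (nat \<Rightarrow> complex) \<Rightarrow> real \<Rightarrow> complex vec" where
  "Phi k f s R = vec k (\<lambda>i. contour_integral (circlepath 0 R)
      (\<lambda>\<zeta>. f \<zeta> * \<zeta>^i / Ps k s \<zeta>) / (2 * pi * \<i>))"

end

theory Submission
  imports Defs
begin

(* A(s) depends on s_k only through the entry (k,1) of its last row, so A(s) is affine in s_k
   with slope the matrix D whose only nonzero entry is (-1)^(k-1) there; by the product rule
   M_p := d(A^p)/ds_k satisfies M_0 = 0 and M_(p+1) = A M_p + D A^p.  Two facts about the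
   companion matrix drive the proof: A E(z) = z E(z) - P_s(z) e_k, and for p < k the first row
   of A^p is the p-th unit row, so D A^p E(z) = (-1)^(k-1) z^p e_k.  Induction on p then yields
   z^p E = A^p E + (-1)^(k-1) P_s M_p E as an exact identity (a fortiori modulo P_s^2), and the
   identity for P'_s is the linear combination of these with coefficients free of s_k.
   For Phi, the last row gives A E(zeta) f(zeta)/P_s(zeta) = zeta E(zeta) f(zeta)/P_s(zeta)
   - f(zeta) e_k, and the contour integral of the entire function f vanishes.
   None of this needs k >= 2. *)

no_notation Finite_Cartesian_Product.vec.vec_nth (infixl \<open>$\<close> 90)
no_notation Formal_Power_Series.fps_nth (infixl \<open>$\<close> 75)

fun pow_mat_deriv :: "'a::semiring_1 mat \<Rightarrow> 'a mat \<Rightarrow> nat \<Rightarrow> 'a mat" where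
  "pow_mat_deriv B D 0 = 0\<^sub>m (dim_row B) (dim_col B)"
| "pow_mat_deriv B D (Suc p) = B * pow_mat_deriv B D p + D * B ^\<^sub>m p"

lemma pow_mat_deriv_carrier [simp]:
  "B \<in> carrier_mat n n \<Longrightarrow> D \<in> carrier_mat n n \<Longrightarrow> pow_mat_deriv B D p \<in> carrier_mat n n"
  by (induction p) auto

lemma pow_mat_Suc_left:
  assumes "A \<in> carrier_mat n n"
  shows "A ^\<^sub>m Suc p = A * A ^\<^sub>m p"
proof (induction p)
  case (Suc p)
  have "A ^\<^sub>m Suc (Suc p) = (A * A ^\<^sub>m p) * A"
    using Suc by simp
  also have "\<dots> = A * A ^\<^sub>m Suc p"
    using assms by (simp add: assoc_mult_mat[of _ n n _ n])
  finally show ?case .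
qed (use assms in simp)

lemma index_mult_mat_square:
  "A \<in> carrier_mat n n \<Longrightarrow> B \<in> carrier_mat n n \<Longrightarrow> i < n \<Longrightarrow> j < n \<Longrightarrow>
    (A * B) $$ (i, j) = (\<Sum>l = 0..<n. A $$ (i, l) * B $$ (l, j))"
  by (simp add: scalar_prod_def)

lemma has_field_derivative_pow_mat_affine:
  fixes B D :: "'a::real_normed_field mat"
  assumes B: "B \<in> carrier_mat n n" and D: "D \<in> carrier_mat n n"
  shows "i < n \<Longrightarrow> j < n \<Longrightarrow>
    ((\<lambda>t. ((B + t \<cdot>\<^sub>m D) ^\<^sub>m p) $$ (i, j)) has_field_derivative
      pow_mat_deriv (B + x \<cdot>\<^sub>m D) D p $$ (i, j)) (at x)"
proof (induction p arbitrary: i j)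
  case 0
  then show ?case
    using B D by simp
next
  case (Suc p)
  let ?C = "\<lambda>t. B + t \<cdot>\<^sub>m D"
  have C: "?C t \<in> carrier_mat n n" for t
    using B D by simp
  have C_entry: "?C t $$ (i, l) = B $$ (i, l) + t * D $$ (i, l)" if "l < n" for t l
    using B D Suc.prems that by simp
  have entry: "(?C t ^\<^sub>m Suc p) $$ (i, j) =
      (\<Sum>l = 0..<n. (B $$ (i, l) + t * D $$ (i, l)) * (?C t ^\<^sub>m p) $$ (l, j))" for t
    unfolding pow_mat_Suc_left[OF C] index_mult_mat_square[OF C pow_carrier_mat[OF C] Suc.prems]
    by (simp add: C_entry)
  have "((\<lambda>t. \<Sum>l = 0..<n. (B $$ (i, l) + t * D $$ (i, l)) * (?C t ^\<^sub>m p) $$ (l, j))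
      has_field_derivative
      (\<Sum>l = 0..<n. D $$ (i, l) * (?C x ^\<^sub>m p) $$ (l, j)
         + pow_mat_deriv (?C x) D p $$ (l, j) * (B $$ (i, l) + x * D $$ (i, l)))) (at x)"
    using Suc.prems by (intro DERIV_sum DERIV_mult Suc.IH) (auto intro!: derivative_eq_intros)
  also have "(\<Sum>l = 0..<n. D $$ (i, l) * (?C x ^\<^sub>m p) $$ (l, j)
         + pow_mat_deriv (?C x) D p $$ (l, j) * (B $$ (i, l) + x * D $$ (i, l)))
      = (\<Sum>l = 0..<n. ?C x $$ (i, l) * pow_mat_deriv (?C x) D p $$ (l, j)
          + D $$ (i, l) * (?C x ^\<^sub>m p) $$ (l, j))"
  proof (rule sum.cong)
    fix l assume "l \<in> {0..<n}"
    then have "?C x $$ (i, l) = B $$ (i, l) + x * D $$ (i, l)"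
      by (intro C_entry) simp
    then show "D $$ (i, l) * (?C x ^\<^sub>m p) $$ (l, j)
         + pow_mat_deriv (?C x) D p $$ (l, j) * (B $$ (i, l) + x * D $$ (i, l))
      = ?C x $$ (i, l) * pow_mat_deriv (?C x) D p $$ (l, j) + D $$ (i, l) * (?C x ^\<^sub>m p) $$ (l, j)"
      by (simp only: mult.commute add.commute)
  qed simp
  also have "\<dots> = (?C x * pow_mat_deriv (?C x) D p) $$ (i, j) + (D * ?C x ^\<^sub>m p) $$ (i, j)"
    unfolding index_mult_mat_square[OF C pow_mat_deriv_carrier[OF C D] Suc.prems]
      index_mult_mat_square[OF D pow_carrier_mat[OF C] Suc.prems]
    by (rule sum.distrib)
  also have "\<dots> = pow_mat_deriv (?C x) D (Suc p) $$ (i, j)"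
    using Suc.prems carrier_matD[OF C[of x]] carrier_matD[OF D]
    by (subst pow_mat_deriv.simps, subst index_add_mat(1)) auto
  finally show ?case
    unfolding entry .
qed

(* dA(s)/ds_k: the variable s_k occurs in A(s) only at position (k-1, 0), 0-based. *)
definition Acomp_dsk :: "nat \<Rightarrow> complex mat" where
  "Acomp_dsk k = mat k k (\<lambda>(i, j). if i + 1 = k \<and> j = 0 then (-1)^(k-1) else 0)"

lemma dim_Acomp [simp]: "dim_row (Acomp k s) = k" "dim_col (Acomp k s) = k"
  by (simp_all add: Acomp_def)

lemma dim_Acomp_dsk [simp]: "dim_row (Acomp_dsk k) = k" "dim_col (Acomp_dsk k) = k"
  by (simp_all add: Acomp_dsk_def)

lemma Acomp_carrier [simp]: "Acomp k s \<in> carrier_mat k k"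
  by (simp add: carrier_matI)

lemma Acomp_dsk_carrier [simp]: "Acomp_dsk k \<in> carrier_mat k k"
  by (simp add: carrier_matI)

lemma Evec_carrier [simp]: "Evec k z \<in> carrier_vec k"
  by (simp add: Evec_def)

lemma dim_pow_mat_deriv_Acomp [simp]:
  "dim_row (pow_mat_deriv (Acomp k s) (Acomp_dsk k) p) = k"
  "dim_col (pow_mat_deriv (Acomp k s) (Acomp_dsk k) p) = k"
  using carrier_matD[OF pow_mat_deriv_carrier[OF Acomp_carrier Acomp_dsk_carrier, of k s p]]
  by simp_all

lemma dim_dsk_mat [simp]: "dim_row (dsk_mat k F s) = k" "dim_col (dsk_mat k F s) = k"
  by (simp_all add: dsk_mat_def)

lemma dsk_mat_carrier [simp]: "dsk_mat k F s \<in> carrier_mat k k"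
  by (simp add: carrier_matI)

lemma Acomp_fun_upd_last: "Acomp k (s(k := t)) = Acomp k (s(k := 0)) + t \<cdot>\<^sub>m Acomp_dsk k"
  by (rule eq_matI) (auto simp: Acomp_def Acomp_dsk_def)

lemma has_field_derivative_Acomp_pow:
  assumes "i < k" "j < k"
  shows "((\<lambda>t. (Acomp k (s(k := t)) ^\<^sub>m p) $$ (i, j)) has_field_derivative
    pow_mat_deriv (Acomp k s) (Acomp_dsk k) p $$ (i, j)) (at (s k))"
  using has_field_derivative_pow_mat_affine[of "Acomp k (s(k := 0))" k "Acomp_dsk k" i j p "s k"] assms
  by (simp add: Acomp_fun_upd_last[symmetric])

lemma dsk_mat_Acomp_pow:
  "dsk_mat k (\<lambda>s'. Acomp k s' ^\<^sub>m p) s = pow_mat_deriv (Acomp k s) (Acomp_dsk k) p"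
proof (rule eq_matI)
  fix i j assume "i < dim_row (pow_mat_deriv (Acomp k s) (Acomp_dsk k) p)"
    "j < dim_col (pow_mat_deriv (Acomp k s) (Acomp_dsk k) p)"
  then have "i < k" "j < k"
    by simp_all
  then show "dsk_mat k (\<lambda>s'. Acomp k s' ^\<^sub>m p) s $$ (i, j) =
      pow_mat_deriv (Acomp k s) (Acomp_dsk k) p $$ (i, j)"
    by (simp add: dsk_mat_def DERIV_imp_deriv[OF has_field_derivative_Acomp_pow])
qed simp_all

lemma Ps_eq: "Ps k s z = z^k - (\<Sum>l = 0..<k. (-1)^(k-1-l) * s (k-l) * z^l)"
proof -
  have "Ps k s z = (\<Sum>l = 0..k. (-1)^(k-l) * sc s (k-l) * z^l)"
    unfolding Ps_def by (subst sum.atLeastAtMost_rev) (auto intro!: sum.cong)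
  also have "\<dots> = z^k + (\<Sum>l = 0..<k. (-1)^(k-l) * s (k-l) * z^l)"
    by (simp add: atLeastLessThanSuc_atLeastAtMost[symmetric] sc_def)
  also have "(\<Sum>l = 0..<k. (-1)^(k-l) * s (k-l) * z^l) =
      - (\<Sum>l = 0..<k. (-1)^(k-1-l) * s (k-l) * z^l)"
    unfolding sum_negf[symmetric]
    by (rule sum.cong) (auto simp: Suc_diff_Suc[symmetric])
  finally show ?thesis
    by simp
qed

lemma Acomp_mult_Evec:
  "Acomp k s *\<^sub>v Evec k z = z \<cdot>\<^sub>v Evec k z - Ps k s z \<cdot>\<^sub>v unit_vec k (k-1)"
proof (rule eq_vecI)
  fix i assume "i < dim_vec (z \<cdot>\<^sub>v Evec k z - Ps k s z \<cdot>\<^sub>v unit_vec k (k-1))"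
  then have i: "i < k" by simp
  have row: "(Acomp k s *\<^sub>v Evec k z) $ i = (\<Sum>l = 0..<k. Acomp k s $$ (i, l) * z^l)"
    using i by (simp add: scalar_prod_def Evec_def)
  show "(Acomp k s *\<^sub>v Evec k z) $ i = (z \<cdot>\<^sub>v Evec k z - Ps k s z \<cdot>\<^sub>v unit_vec k (k-1)) $ i"
  proof (cases "i + 1 = k")
    case True
    then show ?thesis
      using i unfolding row Ps_eq
      by (auto simp: Acomp_def Evec_def power_Suc[symmetric] intro!: sum.cong)
  next
    case False
    then have "(\<Sum>l = 0..<k. Acomp k s $$ (i, l) * z^l) = (\<Sum>l = 0..<k. if l = i + 1 then z^l else 0)"
      using i by (intro sum.cong) (auto simp: Acomp_def)
    then show ?thesis
      using False i unfolding row by (simp add: Evec_def)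
  qed
qed simp

lemma Acomp_dsk_mult_vec:
  assumes "v \<in> carrier_vec k"
  shows "Acomp_dsk k *\<^sub>v v = ((-1)^(k-1) * v $ 0) \<cdot>\<^sub>v unit_vec k (k-1)"
proof (rule eq_vecI)
  fix i assume "i < dim_vec (((-1)^(k-1) * v $ 0) \<cdot>\<^sub>v unit_vec k (k-1))"
  then have i: "i < k" by simp
  have "(Acomp_dsk k *\<^sub>v v) $ i =
      (\<Sum>l = 0..<k. if i + 1 = k \<and> l = 0 then (-1)^(k-1) * v $ l else 0)"
    using i assms by (auto simp: scalar_prod_def Acomp_dsk_def intro!: sum.cong)
  then show "(Acomp_dsk k *\<^sub>v v) $ i = (((-1)^(k-1) * v $ 0) \<cdot>\<^sub>v unit_vec k (k-1)) $ i"
    using i by (cases "i + 1 = k") auto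
qed (use assms in simp)

lemma Acomp_pow_row_0:
  "p < k \<Longrightarrow> l < k \<Longrightarrow> (Acomp k s ^\<^sub>m p) $$ (0, l) = (if l = p then 1 else 0)"
proof (induction p arbitrary: l)
  case (Suc p)
  have "(Acomp k s ^\<^sub>m Suc p) $$ (0, l) =
      (\<Sum>m = 0..<k. (Acomp k s ^\<^sub>m p) $$ (0, m) * Acomp k s $$ (m, l))"
    using Suc.prems by (subst pow_mat.simps(2), intro index_mult_mat_square) auto
  also have "\<dots> = (\<Sum>m = 0..<k. if m = p then Acomp k s $$ (p, l) else 0)"
    using Suc by (intro sum.cong) auto
  also have "\<dots> = Acomp k s $$ (p, l)"
    using Suc.prems by simp
  finally show ?case
    using Suc.prems by (simp add: Acomp_def)
qed simp

lemma Acomp_pow_mult_Evec_0: "p < k \<Longrightarrow> (Acomp k s ^\<^sub>m p *\<^sub>v Evec k z) $ 0 = z^p"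
proof -
  assume p: "p < k"
  have "(Acomp k s ^\<^sub>m p *\<^sub>v Evec k z) $ 0 = (\<Sum>l = 0..<k. (Acomp k s ^\<^sub>m p) $$ (0, l) * z^l)"
    using p by (simp add: scalar_prod_def Evec_def)
  also have "\<dots> = (\<Sum>l = 0..<k. if l = p then z^l else 0)"
    using p by (intro sum.cong) (auto simp: Acomp_pow_row_0)
  finally show ?thesis
    using p by simp
qed

lemma power_smult_Evec:
  "p < k \<Longrightarrow> z^p \<cdot>\<^sub>v Evec k z = Acomp k s ^\<^sub>m p *\<^sub>v Evec k z
     + ((-1)^(k-1) * Ps k s z) \<cdot>\<^sub>v (pow_mat_deriv (Acomp k s) (Acomp_dsk k) p *\<^sub>v Evec k z)"
proof (induction p)
  case 0
  show ?case
    by (rule eq_vecI) auto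
next
  case (Suc p)
  define A D E e where "A = Acomp k s" and "D = Acomp_dsk k" and "E = Evec k z"
    and "e = (unit_vec k (k-1) :: complex vec)"
  define c P where "c = (-1::complex)^(k-1)" and "P = Ps k s z"
  define V W where "V = A ^\<^sub>m p *\<^sub>v E" and "W = pow_mat_deriv A D p *\<^sub>v E"
  have A: "A \<in> carrier_mat k k" and D: "D \<in> carrier_mat k k" and E: "E \<in> carrier_vec k"
    by (simp_all add: A_def D_def E_def)
  have V: "V \<in> carrier_vec k"
    unfolding V_def by (rule mult_mat_vec_carrier[OF pow_carrier_mat[OF A] E])
  have W: "W \<in> carrier_vec k"
    unfolding W_def by (rule mult_mat_vec_carrier[OF pow_mat_deriv_carrier[OF A D] E])
  have "z^p \<cdot>\<^sub>v E = V + (c * P) \<cdot>\<^sub>v W"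
    using Suc by (simp add: A_def D_def E_def V_def W_def c_def P_def)
  then have "z^p \<cdot>\<^sub>v (A *\<^sub>v E) = A *\<^sub>v V + (c * P) \<cdot>\<^sub>v (A *\<^sub>v W)"
    using A E V W by (metis mult_add_distrib_mat_vec mult_mat_vec smult_carrier_vec)
  then have AV: "A *\<^sub>v V + (c * P) \<cdot>\<^sub>v (A *\<^sub>v W) = z^p \<cdot>\<^sub>v (z \<cdot>\<^sub>v E - P \<cdot>\<^sub>v e)"
    by (simp add: A_def E_def P_def e_def Acomp_mult_Evec)
  have "p < k"
    using Suc.prems by simp
  then have "V $ 0 = z^p"
    unfolding V_def A_def E_def by (rule Acomp_pow_mult_Evec_0)
  then have DV: "D *\<^sub>v V = (c * z^p) \<cdot>\<^sub>v e"
    using V unfolding D_def c_def e_def by (simp add: Acomp_dsk_mult_vec)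
  have "A ^\<^sub>m Suc p *\<^sub>v E = A *\<^sub>v V"
    unfolding pow_mat_Suc_left[OF A] V_def by (rule assoc_mult_mat_vec[OF A pow_carrier_mat[OF A] E])
  moreover have "pow_mat_deriv A D (Suc p) *\<^sub>v E = A *\<^sub>v W + D *\<^sub>v V"
    using A D E unfolding V_def W_def
    by (simp add: add_mult_distrib_mat_vec[of _ k k] assoc_mult_mat_vec[OF A pow_mat_deriv_carrier[OF A D] E]
        assoc_mult_mat_vec[OF D pow_carrier_mat[OF A] E])
  moreover have "z^Suc p \<cdot>\<^sub>v E = A *\<^sub>v V + (c * P) \<cdot>\<^sub>v (A *\<^sub>v W + D *\<^sub>v V)"
  proof (rule eq_vecI)
    fix i assume "i < dim_vec (A *\<^sub>v V + (c * P) \<cdot>\<^sub>v (A *\<^sub>v W + D *\<^sub>v V))"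
    then have i: "i < k"
      using carrier_matD[OF D] by simp
    have AV_i: "(A *\<^sub>v V) $ i + c * P * (A *\<^sub>v W) $ i = z^p * (z * E $ i - P * e $ i)"
      using arg_cong[OF AV, of "\<lambda>v. v $ i"] i carrier_matD[OF A] carrier_vecD[OF E]
      by (simp add: e_def)
    have DV_i: "(D *\<^sub>v V) $ i = c * z^p * e $ i"
      using arg_cong[OF DV, of "\<lambda>v. v $ i"] i by (simp add: e_def)
    \<comment> \<open>the e_k terms cancel because c^2 = 1\<close>
    have cc: "c * c = 1"
      by (simp add: c_def flip: power_mult_distrib)
    have "(A *\<^sub>v V) $ i + c * P * ((A *\<^sub>v W) $ i + (D *\<^sub>v V) $ i) =
        ((A *\<^sub>v V) $ i + c * P * (A *\<^sub>v W) $ i) + (c * c) * (P * z^p * e $ i)"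
      unfolding DV_i by (simp add: algebra_simps)
    also have "\<dots> = z * z^p * E $ i"
      unfolding AV_i cc by (simp add: algebra_simps)
    finally have "(A *\<^sub>v V) $ i + c * P * ((A *\<^sub>v W) $ i + (D *\<^sub>v V) $ i) = z * z^p * E $ i" .
    then show "(z^Suc p \<cdot>\<^sub>v E) $ i = (A *\<^sub>v V + (c * P) \<cdot>\<^sub>v (A *\<^sub>v W + D *\<^sub>v V)) $ i"
      using i carrier_matD[OF A] carrier_matD[OF D] carrier_vecD[OF E] by simp
  qed (use carrier_matD[OF D] carrier_vecD[OF E] in simp)
  ultimately show ?case
    by (simp add: A_def D_def E_def c_def P_def)
qed

lemma contour_integral_circlepath_entire:
  "f holomorphic_on UNIV \<Longrightarrow> contour_integral (circlepath 0 R) f = 0"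
  by (intro contour_integral_unique Cauchy_theorem_convex_simple) auto

lemma index_mult_mat_vec_contour_integral:
  assumes "\<And>l. l < n \<Longrightarrow> F l contour_integrable_on \<gamma>" "M \<in> carrier_mat m n" "i < m"
  shows "(M *\<^sub>v vec n (\<lambda>l. contour_integral \<gamma> (F l) / c)) $ i =
    contour_integral \<gamma> (\<lambda>\<zeta>. \<Sum>l = 0..<n. M $$ (i, l) * F l \<zeta>) / c"
proof -
  have "(M *\<^sub>v vec n (\<lambda>l. contour_integral \<gamma> (F l) / c)) $ i =
      (\<Sum>l = 0..<n. contour_integral \<gamma> (\<lambda>\<zeta>. M $$ (i, l) * F l \<zeta>)) / c"
    using assms by (simp add: scalar_prod_def sum_divide_distrib contour_integral_lmul)
  also have "\<dots> = contour_integral \<gamma> (\<lambda>\<zeta>. \<Sum>l = 0..<n. M $$ (i, l) * F l \<zeta>) / c"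
    using assms(1) by (subst contour_integral_sum) (auto intro: contour_integrable_lmul)
  finally show ?thesis .
qed

lemma contour_integrable_circlepath_div_Ps:
  assumes "continuous_on UNIV g" and "\<forall>\<zeta>. Ps k s \<zeta> = 0 \<longrightarrow> norm \<zeta> < R"
  shows "(\<lambda>\<zeta>. g \<zeta> / Ps k s \<zeta>) contour_integrable_on circlepath 0 R"
proof (rule contour_integrable_continuous_circlepath)
  have "Ps k s \<zeta> \<noteq> 0" if "\<zeta> \<in> path_image (circlepath 0 R)" for \<zeta>
    using that assms(2) by auto
  then show "continuous_on (path_image (circlepath 0 R)) (\<lambda>\<zeta>. g \<zeta> / Ps k s \<zeta>)"
    unfolding Ps_def
    by (intro continuous_intros continuous_on_subset[OF assms(1)]) auto
qed

lemma Phi_times_z: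
  assumes f: "f holomorphic_on UNIV" and roots: "\<forall>\<zeta>. Ps k s \<zeta> = 0 \<longrightarrow> norm \<zeta> < R"
  shows "Phi k (\<lambda>z. z * f z) s R = Acomp k s *\<^sub>v Phi k f s R"
proof (rule eq_vecI)
  define \<gamma> where "\<gamma> = circlepath 0 R"
  have cont_f: "continuous_on UNIV f"
    using f by (rule holomorphic_on_imp_continuous_on)
  have integrable: "(\<lambda>\<zeta>. f \<zeta> * g \<zeta> / Ps k s \<zeta>) contour_integrable_on \<gamma>" if "continuous_on UNIV g" for g
    unfolding \<gamma>_def using roots
    by (intro contour_integrable_circlepath_div_Ps continuous_intros that cont_f)
  fix i assume "i < dim_vec (Acomp k s *\<^sub>v Phi k f s R)"
  then have i: "i < k" by simp
  have "(Acomp k s *\<^sub>v Phi k f s R) $ i =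
      contour_integral \<gamma> (\<lambda>\<zeta>. \<Sum>l = 0..<k. Acomp k s $$ (i, l) * (f \<zeta> * \<zeta>^l / Ps k s \<zeta>)) / (2 * pi * \<i>)"
    unfolding Phi_def \<gamma>_def using i
    by (intro index_mult_mat_vec_contour_integral integrable[unfolded \<gamma>_def] continuous_intros) auto
  also have "\<dots> = contour_integral \<gamma> (\<lambda>\<zeta>. \<zeta> * f \<zeta> * \<zeta>^i / Ps k s \<zeta> - unit_vec k (k-1) $ i * f \<zeta>)
      / (2 * pi * \<i>)"
  proof (intro arg_cong[where f = "\<lambda>I. I / (2 * pi * \<i>)"] contour_integral_eq)
    fix \<zeta> assume "\<zeta> \<in> path_image \<gamma>"
    then have "Ps k s \<zeta> \<noteq> 0"
      using roots by (auto simp: \<gamma>_def)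
    have row: "(\<Sum>l = 0..<k. Acomp k s $$ (i, l) * \<zeta>^l) = \<zeta> * \<zeta>^i - Ps k s \<zeta> * unit_vec k (k-1) $ i"
      using arg_cong[OF Acomp_mult_Evec[of k s \<zeta>], of "\<lambda>v. v $ i"] i
      by (simp add: scalar_prod_def Evec_def)
    have "(\<Sum>l = 0..<k. Acomp k s $$ (i, l) * (f \<zeta> * \<zeta>^l / Ps k s \<zeta>)) =
        f \<zeta> / Ps k s \<zeta> * (\<Sum>l = 0..<k. Acomp k s $$ (i, l) * \<zeta>^l)"
      by (simp add: sum_distrib_left mult_ac)
    also have "\<dots> = \<zeta> * f \<zeta> * \<zeta>^i / Ps k s \<zeta> - unit_vec k (k-1) $ i * f \<zeta>"
      using \<open>Ps k s \<zeta> \<noteq> 0\<close> unfolding row by (simp add: field_simps)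
    finally show "(\<Sum>l = 0..<k. Acomp k s $$ (i, l) * (f \<zeta> * \<zeta>^l / Ps k s \<zeta>)) =
        \<zeta> * f \<zeta> * \<zeta>^i / Ps k s \<zeta> - unit_vec k (k-1) $ i * f \<zeta>" .
  qed
  also have "\<dots> = contour_integral \<gamma> (\<lambda>\<zeta>. \<zeta> * f \<zeta> * \<zeta>^i / Ps k s \<zeta>) / (2 * pi * \<i>)"
  proof -
    have int_f: "f contour_integrable_on \<gamma>"
      unfolding \<gamma>_def
      by (rule contour_integrable_continuous_circlepath) (rule continuous_on_subset[OF cont_f], simp)
    have "continuous_on UNIV (\<lambda>\<zeta>::complex. \<zeta> * \<zeta>^i)"
      by (intro continuous_intros)
    from integrable[OF this] have "(\<lambda>\<zeta>. \<zeta> * f \<zeta> * \<zeta>^i / Ps k s \<zeta>) contour_integrable_on \<gamma>"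
      by (simp add: mult_ac)
    from contour_integral_diff[OF this contour_integrable_lmul[OF int_f]] show ?thesis
      using contour_integral_lmul[OF int_f] contour_integral_circlepath_entire[OF f]
      by (simp add: \<gamma>_def)
  qed
  finally show "Phi k (\<lambda>z. z * f z) s R $ i = (Acomp k s *\<^sub>v Phi k f s R) $ i"
    using i by (simp add: Phi_def \<gamma>_def)
qed (simp add: Phi_def)

definition dPs_coeff :: "nat \<Rightarrow> (nat \<Rightarrow> complex) \<Rightarrow> nat \<Rightarrow> complex" where
  "dPs_coeff k s h = (-1)^h * of_nat (k - h) * sc s h"

lemma dPs_eq_sum: "dPs k s z = (\<Sum>h = 0..<k. dPs_coeff k s h * z^(k-h-1))"
proof (cases k)
  case 0
  then show ?thesis
    by (simp add: dPs_def dPs_coeff_def)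
next
  case (Suc m)
  then have "{0..k-1} = {0..<k}"
    by auto
  then show ?thesis
    unfolding dPs_def dPs_coeff_def by simp
qed

lemma foldr_smult_add_mat_carrier:
  "\<forall>h \<in> set xs. X h \<in> carrier_mat n n \<Longrightarrow>
    foldr (\<lambda>h M. c h \<cdot>\<^sub>m X h + M) xs (0\<^sub>m n n) \<in> carrier_mat n n"
  by (induction xs) auto

lemma index_foldr_smult_add_mat:
  "\<forall>h \<in> set xs. X h \<in> carrier_mat n n \<Longrightarrow> i < n \<Longrightarrow> j < n \<Longrightarrow>
    foldr (\<lambda>h M. c h \<cdot>\<^sub>m X h + M) xs (0\<^sub>m n n) $$ (i, j) = (\<Sum>h\<leftarrow>xs. c h * X h $$ (i, j))"
proof (induction xs)
  case (Cons h xs)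
  then have "foldr (\<lambda>h M. c h \<cdot>\<^sub>m X h + M) xs (0\<^sub>m n n) \<in> carrier_mat n n"
    and "X h \<in> carrier_mat n n"
    by (simp_all add: foldr_smult_add_mat_carrier)
  with Cons show ?case
    by (auto dest!: carrier_matD)
qed simp

lemma dPsA_carrier: "dPsA k s \<in> carrier_mat k k"
  unfolding dPsA_def by (rule foldr_smult_add_mat_carrier) simp

lemma index_dPsA:
  "i < k \<Longrightarrow> j < k \<Longrightarrow>
    dPsA k s $$ (i, j) = (\<Sum>h = 0..<k. dPs_coeff k s h * (Acomp k s ^\<^sub>m (k-h-1)) $$ (i, j))"
  unfolding dPsA_def dPs_coeff_def[symmetric]
  by (simp add: index_foldr_smult_add_mat interv_sum_list_conv_sum_set_nat)

lemma index_dsk_mat_dPsA: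
  assumes "i < k" "j < k"
  shows "dsk_mat k (dPsA k) s $$ (i, j) =
    (\<Sum>h = 0..<k. dPs_coeff k s h * pow_mat_deriv (Acomp k s) (Acomp_dsk k) (k-h-1) $$ (i, j))"
proof -
  have entry: "(\<lambda>t. dPsA k (s(k := t)) $$ (i, j)) =
      (\<lambda>t. \<Sum>h = 0..<k. dPs_coeff k s h * (Acomp k (s(k := t)) ^\<^sub>m (k-h-1)) $$ (i, j))"
    using assms by (auto simp: index_dPsA dPs_coeff_def sc_def intro!: sum.cong)
  have "((\<lambda>t. \<Sum>h = 0..<k. dPs_coeff k s h * (Acomp k (s(k := t)) ^\<^sub>m (k-h-1)) $$ (i, j))
      has_field_derivative
      (\<Sum>h = 0..<k. dPs_coeff k s h * pow_mat_deriv (Acomp k s) (Acomp_dsk k) (k-h-1) $$ (i, j)))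
      (at (s k))"
    using assms by (intro DERIV_sum DERIV_cmult has_field_derivative_Acomp_pow)
  from DERIV_imp_deriv[OF this] show ?thesis
    using assms by (simp add: dsk_mat_def entry)
qed

lemma index_mult_mat_vec_lincomb:
  assumes "M \<in> carrier_mat n n" "v \<in> carrier_vec n" "i < n" "finite H"
    and "\<And>h. h \<in> H \<Longrightarrow> X h \<in> carrier_mat n n"
    and "\<And>j. j < n \<Longrightarrow> M $$ (i, j) = (\<Sum>h\<in>H. c h * X h $$ (i, j))"
  shows "(M *\<^sub>v v) $ i = (\<Sum>h\<in>H. c h * (X h *\<^sub>v v) $ i)"
proof -
  have "(M *\<^sub>v v) $ i = (\<Sum>j = 0..<n. \<Sum>h\<in>H. c h * X h $$ (i, j) * v $ j)"
    using assms by (simp add: scalar_prod_def sum_distrib_right)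
  also have "\<dots> = (\<Sum>h\<in>H. c h * (\<Sum>j = 0..<n. X h $$ (i, j) * v $ j))"
    by (subst sum.swap) (simp add: sum_distrib_left mult.assoc)
  also have "\<dots> = (\<Sum>h\<in>H. c h * (X h *\<^sub>v v) $ i)"
  proof (rule sum.cong)
    fix h assume "h \<in> H"
    then have "X h \<in> carrier_mat n n"
      by (rule assms(5))
    then show "c h * (\<Sum>j = 0..<n. X h $$ (i, j) * v $ j) = c h * (X h *\<^sub>v v) $ i"
      using assms(2,3) by (auto simp: scalar_prod_def)
  qed simp
  finally show ?thesis .
qed

lemma dPs_smult_Evec:
  "dPs k s z \<cdot>\<^sub>v Evec k z = dPsA k s *\<^sub>v Evec k z
     + ((-1)^(k-1) * Ps k s z) \<cdot>\<^sub>v (dsk_mat k (dPsA k) s *\<^sub>v Evec k z)"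
proof (rule eq_vecI)
  define c where "c = (-1)^(k-1) * Ps k s z"
  define MD where "MD h = pow_mat_deriv (Acomp k s) (Acomp_dsk k) (k-h-1)" for h
  fix i assume "i < dim_vec (dPsA k s *\<^sub>v Evec k z + c \<cdot>\<^sub>v (dsk_mat k (dPsA k) s *\<^sub>v Evec k z))"
  then have i: "i < k"
    by simp
  have "(dPs k s z \<cdot>\<^sub>v Evec k z) $ i = (\<Sum>h = 0..<k. dPs_coeff k s h * (z^(k-h-1) * z^i))"
    using i by (simp add: dPs_eq_sum Evec_def sum_distrib_right mult.assoc)
  also have "\<dots> = (\<Sum>h = 0..<k. dPs_coeff k s h *
      ((Acomp k s ^\<^sub>m (k-h-1) *\<^sub>v Evec k z) $ i + c * (MD h *\<^sub>v Evec k z) $ i))"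
  proof (rule sum.cong)
    fix h assume "h \<in> {0..<k}"
    then have "k - h - 1 < k" by simp
    from arg_cong[OF power_smult_Evec[OF this, of z s], of "\<lambda>v. v $ i"]
    have "z^(k-h-1) * z^i =
        (Acomp k s ^\<^sub>m (k-h-1) *\<^sub>v Evec k z) $ i + c * (MD h *\<^sub>v Evec k z) $ i"
      using i by (simp add: Evec_def c_def MD_def)
    then show "dPs_coeff k s h * (z^(k-h-1) * z^i) = dPs_coeff k s h *
      ((Acomp k s ^\<^sub>m (k-h-1) *\<^sub>v Evec k z) $ i + c * (MD h *\<^sub>v Evec k z) $ i)"
      by simp
  qed simp
  also have "\<dots> = (\<Sum>h = 0..<k. dPs_coeff k s h * (Acomp k s ^\<^sub>m (k-h-1) *\<^sub>v Evec k z) $ i)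
      + c * (\<Sum>h = 0..<k. dPs_coeff k s h * (MD h *\<^sub>v Evec k z) $ i)"
    by (simp add: distrib_left sum.distrib sum_distrib_left mult.left_commute)
  also have "\<dots> = (dPsA k s *\<^sub>v Evec k z) $ i + c * (dsk_mat k (dPsA k) s *\<^sub>v Evec k z) $ i"
  proof -
    have "(dPsA k s *\<^sub>v Evec k z) $ i =
        (\<Sum>h = 0..<k. dPs_coeff k s h * (Acomp k s ^\<^sub>m (k-h-1) *\<^sub>v Evec k z) $ i)"
      by (rule index_mult_mat_vec_lincomb) (use i dPsA_carrier in \<open>auto simp: index_dPsA\<close>)
    moreover have "(dsk_mat k (dPsA k) s *\<^sub>v Evec k z) $ i =
        (\<Sum>h = 0..<k. dPs_coeff k s h * (MD h *\<^sub>v Evec k z) $ i)"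
      by (rule index_mult_mat_vec_lincomb)
        (use i in \<open>auto simp: index_dsk_mat_dPsA MD_def\<close>)
    ultimately show ?thesis
      by simp
  qed
  finally show "(dPs k s z \<cdot>\<^sub>v Evec k z) $ i =
      (dPsA k s *\<^sub>v Evec k z + c \<cdot>\<^sub>v (dsk_mat k (dPsA k) s *\<^sub>v Evec k z)) $ i"
    using i dPsA_carrier[of k s] by simp
qed (simp add: Evec_def)

lemma eq_mod_P2_if_eq:
  assumes "\<And>s z. U s z = V s z" and "\<And>s z. U s z \<in> carrier_vec k"
  shows "eq_mod_P2 k U V"
  unfolding eq_mod_P2_def
proof (intro exI[of _ "\<lambda>s z i. 0"] conjI allI impI)
  show "polyfun k (\<lambda>s z. 0)"
    by (rule pf_const)
  show "U s z - V s z = (Ps k s z)\<^sup>2 \<cdot>\<^sub>v vec k (\<lambda>i. 0)" for s z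
    using assms[of s z] by (intro eq_vecI) auto
qed

theorem mainTheorem5:
  fixes k :: nat
  assumes "k \<ge> 2"
  shows "(\<forall>p<k. eq_mod_P2 k
            (\<lambda>s z. z^p \<cdot>\<^sub>v Evec k z)
            (\<lambda>s z. (Acomp k s ^\<^sub>m p) *\<^sub>v Evec k z
                 + ((-1)^(k-1) * Ps k s z) \<cdot>\<^sub>v
                     (dsk_mat k (\<lambda>s'. Acomp k s' ^\<^sub>m p) s *\<^sub>v Evec k z)))
       \<and> (\<forall>(f :: complex \<Rightarrow> complex) s (R :: real).
            f holomorphic_on UNIV \<longrightarrow> (\<forall>\<zeta>. Ps k s \<zeta> = 0 \<longrightarrow> norm \<zeta> < R) \<longrightarrow>
            Phi k (\<lambda>z. z * f z) s R = Acomp k s *\<^sub>v Phi k f s R)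
       \<and> eq_mod_P2 k
            (\<lambda>s z. dPs k s z \<cdot>\<^sub>v Evec k z)
            (\<lambda>s z. dPsA k s *\<^sub>v Evec k z
                 + ((-1)^(k-1) * Ps k s z) \<cdot>\<^sub>v
                     (dsk_mat k (dPsA k) s *\<^sub>v Evec k z))"
proof (intro conjI allI impI)
  fix p assume "p < k"
  then show "eq_mod_P2 k (\<lambda>s z. z^p \<cdot>\<^sub>v Evec k z)
      (\<lambda>s z. (Acomp k s ^\<^sub>m p) *\<^sub>v Evec k z
        + ((-1)^(k-1) * Ps k s z) \<cdot>\<^sub>v (dsk_mat k (\<lambda>s'. Acomp k s' ^\<^sub>m p) s *\<^sub>v Evec k z))"
    unfolding dsk_mat_Acomp_pow by (intro eq_mod_P2_if_eq power_smult_Evec) simp_all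
next
  fix f :: "complex \<Rightarrow> complex" and s and R :: real
  assume "f holomorphic_on UNIV" "\<forall>\<zeta>. Ps k s \<zeta> = 0 \<longrightarrow> norm \<zeta> < R"
  then show "Phi k (\<lambda>z. z * f z) s R = Acomp k s *\<^sub>v Phi k f s R"
    by (rule Phi_times_z)
next
  show "eq_mod_P2 k (\<lambda>s z. dPs k s z \<cdot>\<^sub>v Evec k z)
      (\<lambda>s z. dPsA k s *\<^sub>v Evec k z
        + ((-1)^(k-1) * Ps k s z) \<cdot>\<^sub>v (dsk_mat k (dPsA k) s *\<^sub>v Evec k z))"
    by (intro eq_mod_P2_if_eq dPs_smult_Evec) simp
qed

end
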